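(* Let $q$ be a prime power and let $a,b\in\mathbb{F}_q^{*}$ be such that the multiplicative order of $a$ divides the multiplicative order of $b$. Let $n$ be a positive integer such that $\gcd(n,q)=\gcd(n,q-1)=1$. Then the families of $a$-constacyclic and $b$-constacyclic codes of length $n$ over $\mathbb{F}_q$ are monomially equivalent.
   Context: For $c\in\mathbb{F}_q^*$, a linear code $C\subseteq\mathbb{F}_q^n$ is called $c$-constacyclic if for every codeword $(c_0,c_1,\ldots,c_{n-1})\in C$ we also have $(c\, c_{n-1},c_0,\ldots,c_{n-2})\in C$; equivalently, such codes correspond to ideals of $\mathbb{F}_q[x]/\langle x^n-c\rangle$. An isometry of linear codes is an $\mathbb{F}_q$-linear isomorphism preserving Hamming distance (equivalently, a map given by a monomial matrix). For $a,b\in\mathbb{F}_q^*$, the families of $a$-constacyclic and $b$-constacyclic codes of length $n$ over $\mathbb{F}_q$ are called monomially equivalent if there is a one-to-one correspondence between the set of $a$-constacyclic codes and the set of $b$-constacyclic codes of length $n$ given by an isometry of linear codes. *)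

theory Defs
  imports Main
begin

text \<open>Words of length n over a field: functions nat => 'a that vanish outside {0..<n};
  the i-th coordinate of the word is w i, for i < n.\<close>

definition space :: "nat \<Rightarrow> (nat \<Rightarrow> 'a::field) set" where
  "space n = {w. \<forall>i. n \<le> i \<longrightarrow> w i = 0}"

definition hamming_dist :: "nat \<Rightarrow> (nat \<Rightarrow> 'a::field) \<Rightarrow> (nat \<Rightarrow> 'a) \<Rightarrow> nat" where
  "hamming_dist n u v = card {i. i < n \<and> u i \<noteq> v i}"

definition linear_code :: "nat \<Rightarrow> (nat \<Rightarrow> 'a::field) set \<Rightarrow> bool" where
  "linear_code n C \<longleftrightarrow> C \<subseteq> space n \<and> (\<lambda>_. 0) \<in> C \<and>
     (\<forall>u\<in>C. \<forall>v\<in>C. (\<lambda>i. u i + v i) \<in> C) \<and>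
     (\<forall>c. \<forall>u\<in>C. (\<lambda>i. c * u i) \<in> C)"

definition const_shift :: "nat \<Rightarrow> 'a::field \<Rightarrow> (nat \<Rightarrow> 'a) \<Rightarrow> (nat \<Rightarrow> 'a)" where
  "const_shift n c w = (\<lambda>i. if i = 0 then c * w (n - 1) else if i < n then w (i - 1) else 0)"

definition constacyclic :: "nat \<Rightarrow> 'a::field \<Rightarrow> (nat \<Rightarrow> 'a) set \<Rightarrow> bool" where
  "constacyclic n c C \<longleftrightarrow> linear_code n C \<and> (\<forall>w\<in>C. const_shift n c w \<in> C)"

definition isometry :: "nat \<Rightarrow> ((nat \<Rightarrow> 'a::field) \<Rightarrow> (nat \<Rightarrow> 'a)) \<Rightarrow> bool" where
  "isometry n f \<longleftrightarrow> bij_betw f (space n) (space n) \<and>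
     (\<forall>u\<in>space n. \<forall>v\<in>space n. f (\<lambda>i. u i + v i) = (\<lambda>i. f u i + f v i)) \<and>
     (\<forall>c. \<forall>u\<in>space n. f (\<lambda>i. c * u i) = (\<lambda>i. c * f u i)) \<and>
     (\<forall>u\<in>space n. \<forall>v\<in>space n. hamming_dist n (f u) (f v) = hamming_dist n u v)"

definition monomially_equivalent :: "nat \<Rightarrow> 'a::field \<Rightarrow> 'a \<Rightarrow> bool" where
  "monomially_equivalent n a b \<longleftrightarrow>
     (\<exists>f. isometry n f \<and>
        bij_betw (\<lambda>C. f ` C) {C. constacyclic n a C} {C. constacyclic n b C})"

definition mult_order :: "'a::field \<Rightarrow> nat" where
  "mult_order a = (LEAST k. 0 < k \<and> a ^ k = 1)"

end

theory Submission
  imports Defs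
begin

text \<open>Multiplying the i-th coordinate by \<open>m ^ i\<close> is a monomial isometry which, when
  \<open>a = b * m ^ n\<close>, carries the \<open>a\<close>-shift to a scalar multiple of the \<open>b\<close>-shift, hence
  \<open>a\<close>-constacyclic codes onto \<open>b\<close>-constacyclic ones. Since \<open>n\<close> is prime to \<open>q - 1\<close>,
  every non-zero element of the field with \<open>q\<close> elements is an \<open>n\<close>-th power.\<close>

lemma finite_field_power_card_minus_one:
  fixes x :: "'a::{finite,field}"
  assumes "x \<noteq> 0"
  shows "x ^ (card (UNIV :: 'a set) - 1) = 1"
proof -
  let ?U = "UNIV - {0::'a}"
  have "(\<Prod>y\<in>?U. x * y) = (\<Prod>y\<in>?U. y)"
    by (rule prod.reindex_bij_witness[of _ "\<lambda>y. y / x" "\<lambda>y. x * y"]) (use assms in auto)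
  moreover have "(\<Prod>y\<in>?U. x * y) = x ^ card ?U * (\<Prod>y\<in>?U. y)"
    by (simp add: prod.distrib)
  moreover have "(\<Prod>y\<in>?U. y) \<noteq> 0"
    by simp
  ultimately show ?thesis
    by (simp add: card_Diff_singleton)
qed

lemma finite_field_nth_root_exists:
  fixes t :: "'a::{finite,field}"
  assumes "t \<noteq> 0" and "0 < n" and "coprime n (card (UNIV :: 'a set) - 1)"
  shows "\<exists>m. m ^ n = t"
proof -
  obtain x y where bezout: "n * x = (card (UNIV :: 'a set) - 1) * y + 1"
    using bezout_nat[of n "card (UNIV :: 'a set) - 1"] assms(2,3) by auto
  have "(t ^ x) ^ n = (t ^ (card (UNIV :: 'a set) - 1)) ^ y * t"
    by (simp add: bezout mult.commute[of x] power_mult[symmetric] power_add)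
  also have "\<dots> = t"
    using finite_field_power_card_minus_one[OF assms(1)] by simp
  finally show ?thesis ..
qed

definition scale_powers :: "'a::field \<Rightarrow> (nat \<Rightarrow> 'a) \<Rightarrow> (nat \<Rightarrow> 'a)" where
  "scale_powers m w = (\<lambda>i. m ^ i * w i)"

lemma scale_powers_scale_powers: "scale_powers m (scale_powers m' w) = scale_powers (m * m') w"
  by (simp add: scale_powers_def power_mult_distrib mult.assoc)

lemma scale_powers_one [simp]: "scale_powers 1 w = w"
  by (simp add: scale_powers_def)

lemma scale_powers_inverse [simp]:
  "m \<noteq> 0 \<Longrightarrow> scale_powers m (scale_powers (inverse m) w) = w"
  "m \<noteq> 0 \<Longrightarrow> scale_powers (inverse m) (scale_powers m w) = w"
  by (simp_all add: scale_powers_scale_powers)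

lemma scale_powers_space: "w \<in> space n \<Longrightarrow> scale_powers m w \<in> space n"
  by (simp add: space_def scale_powers_def)

lemma isometry_scale_powers:
  fixes m :: "'a::field"
  assumes "m \<noteq> 0"
  shows "isometry n (scale_powers m)"
  unfolding isometry_def
proof (intro conjI ballI allI)
  show "bij_betw (scale_powers m) (space n) (space n)"
    by (rule bij_betw_byWitness[where f' = "scale_powers (inverse m)"])
      (use assms in \<open>auto simp: scale_powers_space\<close>)
  fix u v :: "nat \<Rightarrow> 'a"
  show "scale_powers m (\<lambda>i. u i + v i) = (\<lambda>i. scale_powers m u i + scale_powers m v i)"
    by (simp add: scale_powers_def distrib_left)
  show "scale_powers m (\<lambda>i. c * u i) = (\<lambda>i. c * scale_powers m u i)" for c
    by (simp add: scale_powers_def mult.left_commute)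
  have "{i. i < n \<and> scale_powers m u i \<noteq> scale_powers m v i} = {i. i < n \<and> u i \<noteq> v i}"
    using assms by (auto simp: scale_powers_def)
  then show "hamming_dist n (scale_powers m u) (scale_powers m v) = hamming_dist n u v"
    by (simp add: hamming_dist_def)
qed

lemma linear_code_isometry_image:
  assumes "isometry n f" and "linear_code n C"
  shows "linear_code n (f ` C)"
proof -
  have space: "C \<subseteq> space n" and zero: "(\<lambda>_. 0) \<in> C"
    and add: "\<And>u v. u \<in> C \<Longrightarrow> v \<in> C \<Longrightarrow> (\<lambda>i. u i + v i) \<in> C"
    and smult: "\<And>c u. u \<in> C \<Longrightarrow> (\<lambda>i. c * u i) \<in> C"
    using assms(2) by (auto simp: linear_code_def)
  have f_add: "f (\<lambda>i. u i + v i) = (\<lambda>i. f u i + f v i)"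
    and f_smult: "f (\<lambda>i. c * u i) = (\<lambda>i. c * f u i)" if "u \<in> C" "v \<in> C" for u v c
    using assms(1) space that by (auto simp: isometry_def subset_iff)
  have "f ` C \<subseteq> space n"
    using assms(1) space by (auto simp: isometry_def bij_betw_def)
  moreover have "f (\<lambda>_. 0) = (\<lambda>_. 0)"
    using f_smult[OF zero zero, of 0] by simp
  then have "(\<lambda>_. 0) \<in> f ` C"
    using zero by (metis image_eqI)
  moreover have "(\<lambda>i. f u i + f v i) \<in> f ` C" if "u \<in> C" "v \<in> C" for u v
    using f_add[OF that] add[OF that] by (metis image_eqI)
  moreover have "(\<lambda>i. c * f u i) \<in> f ` C" if "u \<in> C" for u c
    using f_smult[OF that that] smult[OF that] by (metis image_eqI)
  ultimately show ?thesis
    unfolding linear_code_def by blast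
qed

text \<open>This is the substitution \<open>x \<mapsto> m x\<close> in \<open>F[x]\<close>, which maps \<open>x ^ n - c * m ^ n\<close>
  to \<open>m ^ n * (x ^ n - c)\<close>.\<close>

lemma scale_powers_const_shift:
  assumes "0 < n"
  shows "scale_powers m (const_shift n (c * m ^ n) w) = (\<lambda>i. m * const_shift n c (scale_powers m w) i)"
proof
  fix i
  have "m ^ n = m * m ^ (n - 1)"
    using assms by (simp add: power_eq_if)
  moreover have "m ^ i = m * m ^ (i - 1)" if "i \<noteq> 0"
    using that by (simp add: power_eq_if)
  ultimately show "scale_powers m (const_shift n (c * m ^ n) w) i = m * const_shift n c (scale_powers m w) i"
    by (simp add: const_shift_def scale_powers_def mult_ac)
qed

lemma constacyclic_scale_powers_image:
  fixes m :: "'a::field"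
  assumes "0 < n" and "m \<noteq> 0" and "constacyclic n (c * m ^ n) C"
  shows "constacyclic n c (scale_powers m ` C)"
  unfolding constacyclic_def
proof (intro conjI ballI)
  show lin: "linear_code n (scale_powers m ` C)"
    using assms(3) linear_code_isometry_image[OF isometry_scale_powers[OF assms(2)]]
    by (simp add: constacyclic_def)
  fix w assume "w \<in> scale_powers m ` C"
  then obtain u where u: "u \<in> C" "w = scale_powers m u"
    by blast
  have "const_shift n (c * m ^ n) u \<in> C"
    using assms(3) u(1) by (simp add: constacyclic_def)
  then have "(\<lambda>i. m * const_shift n c w i) \<in> scale_powers m ` C"
    unfolding u(2) scale_powers_const_shift[OF assms(1), symmetric] by (rule imageI)
  then have "(\<lambda>i. inverse m * (m * const_shift n c w i)) \<in> scale_powers m ` C"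
    using lin unfolding linear_code_def by (elim conjE allE[of _ "inverse m"] bspec)
  then show "const_shift n c w \<in> scale_powers m ` C"
    using assms(2) by (simp add: mult.assoc[symmetric])
qed

lemma monomially_equivalent_if_eq_mult_power:
  fixes a b m :: "'a::field"
  assumes "0 < n" and "m \<noteq> 0" and "a = b * m ^ n"
  shows "monomially_equivalent n a b"
proof -
  have "b = a * inverse m ^ n"
    using assms(2,3) by (simp add: power_inverse)
  then have "constacyclic n a (scale_powers (inverse m) ` D)" if "constacyclic n b D" for D
    using constacyclic_scale_powers_image[of n "inverse m" a D] assms(1,2) that by simp
  moreover have "constacyclic n b (scale_powers m ` C)" if "constacyclic n a C" for C
    using constacyclic_scale_powers_image[of n m b C] assms that by simp
  ultimately have "bij_betw (\<lambda>C. scale_powers m ` C) {C. constacyclic n a C} {C. constacyclic n b C}"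
    by (intro bij_betw_byWitness[where f' = "\<lambda>D. scale_powers (inverse m) ` D"])
      (use assms(2) in \<open>auto simp: image_comp comp_def\<close>)
  then show ?thesis
    unfolding monomially_equivalent_def using isometry_scale_powers[OF assms(2)] by blast
qed

theorem corollary3p2:
  fixes a b :: "'a::{finite,field}" and n :: nat
  assumes "a \<noteq> 0" and "b \<noteq> 0"
    and "mult_order a dvd mult_order b"
    and "0 < n"
    and "gcd n (card (UNIV :: 'a set)) = 1" and "gcd n ((card (UNIV :: 'a set)) - 1) = 1"
  shows "monomially_equivalent n a b"
proof -
  obtain m :: 'a where m: "m ^ n = a / b"
    using finite_field_nth_root_exists[of "a / b" n] assms(1,2,4,6) by (auto simp: coprime_iff_gcd_eq_1)
  then have "m \<noteq> 0"
    using assms(1,2,4) by (auto simp: zero_power)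
  moreover have "a = b * m ^ n"
    using m assms(2) by simp
  ultimately show ?thesis
    using monomially_equivalent_if_eq_mult_power assms(4) by blast
qed

end
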